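(* Let $f$ be an additive function from the positive integers to the nonnegative integers with $f(p)\ge1$ for every prime $p$. Let $n=\prod_{i=1}^k p_i^{e_i}$ with distinct primes $p_i$ and $e_i\ge1$. Then $n$ is $f$-practical if and only if $$f(p_i^e)\le 1+\sum_{\substack{d\mid n\\ f(d)<f(p_i^e)}} f(d)$$ holds for every $1\le i\le k$ and every $1\le e\le e_i$.
   Context: $f$ additive means $f(ab)=f(a)+f(b)$ whenever $\gcd(a,b)=1$ (so $f(1)=0$). $S_f(n)=\sum_{d\mid n}f(d)$. A positive integer $n$ is $f$-practical if every positive integer $m\le S_f(n)$ equals $\sum_{d\in\mathcal{D}}f(d)$ for some set $\mathcal{D}$ of distinct divisors of $n$. *)

theory Defs
  imports "HOL-Computational_Algebra.Primes"
begin

definition additive_fun :: "(nat \<Rightarrow> nat) \<Rightarrow> bool" where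
  "additive_fun f \<longleftrightarrow>
     (\<forall>a b. a > 0 \<longrightarrow> b > 0 \<longrightarrow> coprime a b \<longrightarrow> f (a * b) = f a + f b)"

definition S_f :: "(nat \<Rightarrow> nat) \<Rightarrow> nat \<Rightarrow> nat" where
  "S_f f n = (\<Sum>d\<in>{d. d dvd n}. f d)"

definition f_practical :: "(nat \<Rightarrow> nat) \<Rightarrow> nat \<Rightarrow> bool" where
  "f_practical f n \<longleftrightarrow>
     (\<forall>m. 1 \<le> m \<and> m \<le> S_f f n \<longrightarrow>
        (\<exists>D. D \<subseteq> {d. d dvd n} \<and> m = (\<Sum>d\<in>D. f d)))"

end

theory Submission
  imports Defs
begin

text \<open>
  Nonnegative weights on a finite set represent every integer from \<open>1\<close> to their total as a
  subset sum exactly when each weight is at most one more than the sum of all strictly smaller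
  weights: necessity by looking at \<open>1 +\<close> that sum, sufficiency by adding the elements in order
  of increasing weight. For the divisors of \<open>n\<close> weighted by an additive \<open>f\<close> the condition only
  has to be checked at prime powers. Any other divisor \<open>d > 1\<close> splits as \<open>d = a b\<close> with coprime
  proper factors, so \<open>f d = f a + f b\<close>; if one summand vanishes the condition at \<open>d\<close> is the
  condition at the other factor, and otherwise \<open>a\<close> and \<open>b\<close> are two distinct divisors that are
  strictly lighter than \<open>d\<close>.
\<close>

definition subset_sums_complete :: "('a \<Rightarrow> nat) \<Rightarrow> 'a set \<Rightarrow> bool" where
  "subset_sums_complete w A \<longleftrightarrow>
     (\<forall>m. 1 \<le> m \<and> m \<le> sum w A \<longrightarrow> (\<exists>D. D \<subseteq> A \<and> m = sum w D))"

lemma f_practical_iff_subset_sums_complete: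
  "f_practical f n \<longleftrightarrow> subset_sums_complete f {d. d dvd n}"
  unfolding f_practical_def subset_sums_complete_def S_f_def ..

lemma subset_sums_complete_weight_bound:
  fixes w :: "'a \<Rightarrow> nat"
  assumes "finite A" "subset_sums_complete w A" "x \<in> A"
  shows "w x \<le> 1 + sum w {y\<in>A. w y < w x}"
proof (rule ccontr)
  define L where "L = {y\<in>A. w y < w x}"
  assume "\<not> w x \<le> 1 + sum w {y\<in>A. w y < w x}"
  then have gap: "1 + sum w L < w x" by (simp only: L_def not_le)
  have "finite L" "x \<notin> L" "insert x L \<subseteq> A"
    using assms unfolding L_def by auto
  then have "w x + sum w L \<le> sum w A"
    using sum_mono2[OF \<open>finite A\<close> \<open>insert x L \<subseteq> A\<close>, of w] by simp
  then have "1 \<le> 1 + sum w L \<and> 1 + sum w L \<le> sum w A"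
    using gap by linarith
  then obtain D where D: "D \<subseteq> A" "1 + sum w L = sum w D"
    using assms(2) unfolding subset_sums_complete_def by blast
  show False
  proof (cases "D \<subseteq> L")
    case True
    then show False using D sum_mono2[OF \<open>finite L\<close>, of D w] by simp
  next
    case False
    then obtain y where "y \<in> D" "y \<notin> L" by blast
    then have "w x \<le> w y" using D(1) unfolding L_def by auto
    moreover have "w y \<le> sum w D"
      using \<open>y \<in> D\<close> D(1) assms(1) by (intro member_le_sum) (auto intro: finite_subset)
    ultimately show False using D gap by simp
  qed
qed

lemma subset_sums_complete_insert:
  fixes w :: "'a \<Rightarrow> nat"
  assumes "finite B" "x \<notin> B" "subset_sums_complete w B" "w x \<le> 1 + sum w B"
  shows "subset_sums_complete w (insert x B)"
  unfolding subset_sums_complete_def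
proof (intro allI impI)
  fix m assume m: "1 \<le> m \<and> m \<le> sum w (insert x B)"
  have total: "sum w (insert x B) = w x + sum w B"
    using assms(1,2) by simp
  have B_sums: "\<exists>D. D \<subseteq> B \<and> k = sum w D" if "1 \<le> k" "k \<le> sum w B" for k
    using assms(3) that unfolding subset_sums_complete_def by blast
  consider "m \<le> sum w B" | "m = w x" | "w x < m" "m - w x \<le> sum w B"
    using m assms(4) total by linarith
  then show "\<exists>D. D \<subseteq> insert x B \<and> m = sum w D"
  proof cases
    case 1
    then show ?thesis using m B_sums by blast
  next
    case 2
    then show ?thesis by (intro exI[of _ "{x}"]) simp
  next
    case 3
    then have "1 \<le> m - w x" by simp
    then obtain D where D: "D \<subseteq> B" "m - w x = sum w D"
      using B_sums 3(2) by blast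
    then have "sum w (insert x D) = w x + sum w D"
      using assms(1,2) finite_subset by (subst sum.insert) auto
    then show ?thesis using D 3 by (intro exI[of _ "insert x D"]) auto
  qed
qed

lemma weight_bound_imp_subset_sums_complete:
  fixes w :: "'a \<Rightarrow> nat"
  assumes "finite A" "\<forall>x\<in>A. w x \<le> 1 + sum w {y\<in>A. w y < w x}"
  shows "subset_sums_complete w A"
  using assms
proof (induction A rule: finite_ranking_induct[where f = w])
  case empty
  then show ?case by (simp add: subset_sums_complete_def)
next
  case (insert x S)
  show ?case
  proof (cases "x \<in> S")
    case True
    then show ?thesis using insert by (simp add: insert_absorb)
  next
    case False
    have lighter: "{z\<in>insert x S. w z < w y} = {z\<in>S. w z < w y}" if "y \<in> S" for y
      using insert.hyps(2)[OF that] by auto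
    have "\<forall>y\<in>S. w y \<le> 1 + sum w {z\<in>S. w z < w y}"
    proof
      fix y assume "y \<in> S"
      then show "w y \<le> 1 + sum w {z\<in>S. w z < w y}"
        using insert.prems lighter[OF \<open>y \<in> S\<close>] by auto
    qed
    then have "subset_sums_complete w S" by (rule insert.IH)
    moreover have "sum w {y\<in>insert x S. w y < w x} \<le> sum w S"
      using insert.hyps(1) by (intro sum_mono2) auto
    with insert.prems have "w x \<le> 1 + sum w S" by auto
    ultimately show ?thesis
      by (rule subset_sums_complete_insert[OF insert.hyps(1) False])
  qed
qed

lemma subset_sums_complete_iff_weight_bound:
  fixes w :: "'a \<Rightarrow> nat"
  assumes "finite A"
  shows "subset_sums_complete w A \<longleftrightarrow> (\<forall>x\<in>A. w x \<le> 1 + sum w {y\<in>A. w y < w x})"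
  using subset_sums_complete_weight_bound[OF assms] weight_bound_imp_subset_sums_complete[OF assms]
  by (intro iffI ballI)

lemma weight_bound_add:
  fixes w :: "'a \<Rightarrow> nat"
  assumes "finite A" "a \<in> A" "b \<in> A" "a \<noteq> b" "w x = w a + w b"
    and "w a \<le> 1 + sum w {y\<in>A. w y < w a}" "w b \<le> 1 + sum w {y\<in>A. w y < w b}"
  shows "w x \<le> 1 + sum w {y\<in>A. w y < w x}"
proof -
  consider "w a = 0" | "w b = 0" | "w a \<noteq> 0 \<and> w b \<noteq> 0" by fast
  then show ?thesis
  proof cases
    case 1
    then show ?thesis using assms(5,7) by simp
  next
    case 2
    then show ?thesis using assms(5,6) by simp
  next
    case 3
    then have "{a, b} \<subseteq> {y\<in>A. w y < w x}" using assms(2,3,5) by auto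
    then have "sum w {a, b} \<le> sum w {y\<in>A. w y < w x}"
      using assms(1) by (intro sum_mono2) auto
    then show ?thesis using assms(4,5) by simp
  qed
qed

lemma additive_funD:
  "additive_fun f \<Longrightarrow> 0 < a \<Longrightarrow> 0 < b \<Longrightarrow> coprime a b \<Longrightarrow> f (a * b) = f a + f b"
  unfolding additive_fun_def by blast

lemma additive_fun_1: "additive_fun f \<Longrightarrow> f 1 = 0"
  using additive_funD[of f 1 1] by simp

lemma additive_fun_weight_bound_divisors:
  fixes f :: "nat \<Rightarrow> nat"
  assumes "additive_fun f" "n > 0"
    and prime_powers: "\<And>p e. prime p \<Longrightarrow> 1 \<le> e \<Longrightarrow> p ^ e dvd n \<Longrightarrow>
       f (p ^ e) \<le> 1 + sum f {d. d dvd n \<and> f d < f (p ^ e)}"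
  shows "d dvd n \<Longrightarrow> f d \<le> 1 + sum f {d'. d' dvd n \<and> f d' < f d}"
proof (induction d rule: less_induct)
  case (less d)
  have "d > 0" using less.prems assms(2) by (cases "d = 0") simp_all
  show ?case
  proof (cases "d = 1")
    case True
    then show ?thesis using additive_fun_1[OF assms(1)] by simp
  next
    case False
    then obtain p where p: "prime p" "p dvd d" using prime_factor_nat by blast
    define e where "e = multiplicity p d"
    have "d \<noteq> 0" "\<not> is_unit p" using \<open>d > 0\<close> p(1) by auto
    then obtain b where d: "d = p ^ e * b" and "\<not> p dvd b"
      using multiplicity_decompose' unfolding e_def by metis
    have "e \<ge> 1" using p \<open>d > 0\<close> by (simp add: e_def Suc_le_eq prime_multiplicity_gt_zero_iff)
    then have "p ^ e > 1" using prime_gt_1_nat[OF p(1)] by (intro one_less_power) auto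
    have "b > 0" using d \<open>d > 0\<close> by (cases "b = 0") simp_all
    have "coprime (p ^ e) b"
      using \<open>\<not> p dvd b\<close> p(1) by (simp add: coprime_power_left_iff prime_imp_coprime)
    have fd: "f d = f (p ^ e) + f b"
      unfolding d using \<open>p ^ e > 1\<close> \<open>b > 0\<close> \<open>coprime (p ^ e) b\<close>
      by (intro additive_funD[OF assms(1)])
        (simp_all add: prime_gt_0_nat[OF p(1)] del: coprime_power_left_iff)
    show ?thesis
    proof (cases "b = 1")
      case True
      then show ?thesis using prime_powers[OF p(1) \<open>e \<ge> 1\<close>] less.prems d by simp
    next
      case False
      then have "b > 1" using \<open>b > 0\<close> by simp
      have "p ^ e < d" "b < d"
        using d \<open>b > 1\<close> \<open>p ^ e > 1\<close> prime_gt_0_nat[OF p(1)] by simp_all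
      moreover have "p ^ e dvd n" "b dvd n"
        using less.prems unfolding d by (rule dvd_mult_left, rule dvd_mult_right)
      moreover have "p ^ e \<noteq> b"
        using \<open>coprime (p ^ e) b\<close> \<open>p ^ e > 1\<close> by auto
      ultimately show ?thesis
        using weight_bound_add[of "{d. d dvd n}" "p ^ e" b f d] assms(2) fd less.IH
        by simp
    qed
  qed
qed

lemma prime_factor_power_iff:
  fixes n p :: nat
  assumes "n > 0" "1 \<le> e"
  shows "p \<in> prime_factors n \<and> e \<le> multiplicity p n \<longleftrightarrow> prime p \<and> p ^ e dvd n"
proof (cases "prime p")
  case True
  have "p dvd p ^ e" using assms(2) by (simp add: dvd_power)
  moreover have "p ^ e dvd n \<longleftrightarrow> e \<le> multiplicity p n"
    using True assms(1) by (intro power_dvd_iff_le_multiplicity) auto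
  ultimately show ?thesis
    using True assms(1) by (auto simp: in_prime_factors_iff intro: dvd_trans)
qed (simp add: in_prime_factors_iff)

theorem lemma6p1:
  fixes f :: "nat \<Rightarrow> nat" and n :: nat
  assumes "additive_fun f"
    and "\<And>p. prime p \<Longrightarrow> f p \<ge> 1"
    and "n > 0"
  shows "f_practical f n \<longleftrightarrow>
    (\<forall>p\<in>prime_factors n. \<forall>e. 1 \<le> e \<and> e \<le> multiplicity p n \<longrightarrow>
       f (p ^ e) \<le> 1 + (\<Sum>d\<in>{d. d dvd n \<and> f d < f (p ^ e)}. f d))"
    (is "_ \<longleftrightarrow> ?prime_power_bounds")
proof -
  have "f_practical f n \<longleftrightarrow>
      (\<forall>d. d dvd n \<longrightarrow> f d \<le> 1 + sum f {d'. d' dvd n \<and> f d' < f d})"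
    using subset_sums_complete_iff_weight_bound[of "{d. d dvd n}" f] assms(3)
    by (simp add: f_practical_iff_subset_sums_complete)
  also have "\<dots> \<longleftrightarrow> (\<forall>p e. prime p \<and> 1 \<le> e \<and> p ^ e dvd n \<longrightarrow>
      f (p ^ e) \<le> 1 + sum f {d. d dvd n \<and> f d < f (p ^ e)})"
    using additive_fun_weight_bound_divisors[OF assms(1,3)] by blast
  also have "\<dots> \<longleftrightarrow> ?prime_power_bounds"
    using prime_factor_power_iff[OF assms(3)] by blast
  finally show ?thesis .
qed

end
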